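(* Let $n\ge 1$ and let $\mathcal{A}$ be the real central hyperplane arrangement in $\mathbb{R}^{n+1}$ consisting of the hyperplanes $\{x_i=x_j\}$ and $\{x_i=-x_j\}$ for $1\le i<j\le n+1$, together with the hyperplane $\{x_1=0\}$. Then $\mathcal{A}$ is simplicial, i.e. every chamber (connected component of the complement of the union of the hyperplanes in $\mathbb{R}^{n+1}$) is an open simplicial cone. *)

theory Defs
  imports "HOL-Analysis.Analysis"
begin

text \<open>Coordinates of R^(n+1) are indexed by a finite, well-ordered type 'n
  (CARD('n) = n+1); the order on 'n plays the role of 1 < 2 < ... < n+1, and
  the first coordinate x_1 is the coordinate at the least index.\<close>

definition first_idx :: "'n::{finite,wellorder}" where
  "first_idx = (LEAST i. True)"

definition arrB :: "(real ^ 'n::{finite,wellorder}) set set" where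
  "arrB = {{x. x $ i = x $ j} | i j. i < j}
        \<union> {{x. x $ i = - (x $ j)} | i j. i < j}
        \<union> {{x. x $ first_idx = 0}}"

definition chambers :: "('a::real_normed_vector) set set \<Rightarrow> 'a set set" where
  "chambers A = components (UNIV - \<Union>A)"

definition open_simplicial_cone :: "('a::euclidean_space) set \<Rightarrow> bool" where
  "open_simplicial_cone C \<longleftrightarrow>
     (\<exists>V. finite V \<and> independent V \<and> card V = DIM('a) \<and>
          C = {(\<Sum>v\<in>V. c v *\<^sub>R v) | c. \<forall>v\<in>V. c v > 0})"

definition simplicial_arrangement :: "('a::euclidean_space) set set \<Rightarrow> bool" where
  "simplicial_arrangement A \<longleftrightarrow> (\<forall>C\<in>chambers A. open_simplicial_cone C)"

end

theory Submission
  imports Defs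
begin

text \<open>A point lies off the arrangement iff its first coordinate is nonzero and its
  coordinates have pairwise distinct absolute values. Given such a point \<open>p\<close>, enumerate
  the coordinates by increasing \<open>\<bar>p\<^sub>i\<bar>\<close> and flip signs so that in the resulting
  orthonormal frame \<open>p\<close> has coordinates \<open>0 \<le> y\<^sub>0 < y\<^sub>1 < \<dots> < y\<^sub>n\<close>. The chamber of \<open>p\<close>
  is then the Weyl chamber \<open>0 < y\<^sub>0 < \<dots> < y\<^sub>n\<close> of type B if the smallest
  \<open>\<bar>p\<^sub>i\<bar>\<close> is \<open>\<bar>p\<^sub>1\<bar>\<close>, and the Weyl chamber \<open>\<bar>y\<^sub>0\<bar> < y\<^sub>1 < \<dots> < y\<^sub>n\<close>
  of type D otherwise: each wall of that cone is a hyperplane of the arrangement, and the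
  cone itself avoids the arrangement. Both cones are cut out by n + 1 simple roots that
  admit an explicit dual basis, so they are open simplicial cones.\<close>

definition open_polyhedral_cone :: "(nat \<Rightarrow> 'a::real_inner) \<Rightarrow> nat \<Rightarrow> 'a set" where
  "open_polyhedral_cone w N = {x. \<forall>k<N. 0 < w k \<bullet> x}"

lemma convex_open_polyhedral_cone: "convex (open_polyhedral_cone w N)"
proof -
  have "open_polyhedral_cone w N = (\<Inter>k<N. {x. 0 < w k \<bullet> x})"
    by (auto simp: open_polyhedral_cone_def)
  then show ?thesis
    by (simp add: convex_INT convex_halfspace_gt)
qed

lemma component_eq_open_polyhedral_cone:
  assumes C: "C \<in> components U" and "p \<in> C"
    and walls: "\<And>x k. x \<in> U \<Longrightarrow> k < N \<Longrightarrow> w k \<bullet> x \<noteq> 0"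
    and p: "p \<in> open_polyhedral_cone w N"
    and cone_subset: "open_polyhedral_cone w N \<subseteq> U"
  shows "C = open_polyhedral_cone w N"
proof
  have "C = connected_component_set U p"
    using C \<open>p \<in> C\<close> by (metis components_iff connected_component_eq)
  then show "open_polyhedral_cone w N \<subseteq> C"
    using p cone_subset
    by (metis connected_component_maximal convex_connected convex_open_polyhedral_cone)
next
  show "C \<subseteq> open_polyhedral_cone w N"
  proof (rule subsetI, unfold open_polyhedral_cone_def, intro CollectI allI impI)
    fix x k assume "x \<in> C" "k < N"
    have "\<not> w k \<bullet> x \<le> 0"
    proof
      assume "w k \<bullet> x \<le> 0"
      then obtain z where "z \<in> C" "w k \<bullet> z = 0"
        using connected_ivt_hyperplane[OF in_components_connected[OF C] \<open>x \<in> C\<close> \<open>p \<in> C\<close>]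
          p \<open>k < N\<close> by (force simp: open_polyhedral_cone_def)
      then show False
        using walls \<open>k < N\<close> in_components_subset[OF C] by blast
    qed
    then show "0 < w k \<bullet> x" by simp
  qed
qed

lemma inner_biorthogonal_sum:
  fixes w v :: "nat \<Rightarrow> 'a::real_inner"
  assumes biorth: "\<And>i j. i < N \<Longrightarrow> j < N \<Longrightarrow> w i \<bullet> v j = (if i = j then 1 else 0)"
    and "i < N"
  shows "w i \<bullet> (\<Sum>k<N. c k *\<^sub>R v k) = c i"
proof -
  have "w i \<bullet> (\<Sum>k<N. c k *\<^sub>R v k) = (\<Sum>k<N. if k = i then c k else 0)"
    unfolding inner_sum_right using \<open>i < N\<close> by (intro sum.cong) (auto simp: biorth)
  with \<open>i < N\<close> show ?thesis by simp
qed

lemma open_simplicial_cone_biorthogonal: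
  fixes w v :: "nat \<Rightarrow> 'a::euclidean_space"
  assumes N: "N = DIM('a)"
    and biorth: "\<And>i j. i < N \<Longrightarrow> j < N \<Longrightarrow> w i \<bullet> v j = (if i = j then 1 else 0)"
  shows "open_simplicial_cone (open_polyhedral_cone w N)"
proof -
  have inj: "inj_on v {..<N}"
    by (rule inj_onI) (metis biorth lessThan_iff zero_neq_one)
  define V where "V = v ` {..<N}"
  have fin: "finite V" and card: "card V = DIM('a)"
    using inj N by (auto simp: V_def card_image)
  have coeff: "w i \<bullet> (\<Sum>u\<in>V. c u *\<^sub>R u) = c (v i)" if "i < N" for c i
    using inner_biorthogonal_sum[OF biorth that, of "c \<circ> v"] inj
    by (simp add: V_def sum.reindex)
  have indep: "independent V"
    unfolding independent_explicit
  proof (intro conjI allI impI ballI fin)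
    fix c u assume "(\<Sum>u\<in>V. c u *\<^sub>R u) = 0" "u \<in> V"
    then obtain i where "i < N" "u = v i" "w i \<bullet> (\<Sum>u\<in>V. c u *\<^sub>R u) = 0"
      by (auto simp: V_def)
    then show "c u = 0" using coeff by simp
  qed
  have span: "span V = UNIV"
    using card_eq_dim[of V UNIV] indep fin card by auto
  have "open_polyhedral_cone w N = {\<Sum>u\<in>V. c u *\<^sub>R u |c. \<forall>u\<in>V. 0 < c u}"
  proof (intro equalityI subsetI)
    fix x assume x: "x \<in> open_polyhedral_cone w N"
    obtain c where c: "x = (\<Sum>u\<in>V. c u *\<^sub>R u)"
      using span span_finite[OF fin] by blast
    have "\<forall>u\<in>V. 0 < c u"
      using x coeff by (auto simp: V_def c open_polyhedral_cone_def)
    with c show "x \<in> {\<Sum>u\<in>V. c u *\<^sub>R u |c. \<forall>u\<in>V. 0 < c u}" by blast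
  next
    fix x assume "x \<in> {\<Sum>u\<in>V. c u *\<^sub>R u |c. \<forall>u\<in>V. 0 < c u}"
    then show "x \<in> open_polyhedral_cone w N"
      using coeff by (auto simp: V_def open_polyhedral_cone_def)
  qed
  then show ?thesis
    unfolding open_simplicial_cone_def using fin indep card by blast
qed

text \<open>In an orthonormal frame \<open>e\<close>, the first root \<open>r = e 0\<close> gives the simple roots
  of type B and \<open>r = e 0 + e 1\<close> those of type D.\<close>

definition simple_roots :: "(nat \<Rightarrow> 'a::real_vector) \<Rightarrow> 'a \<Rightarrow> nat \<Rightarrow> 'a" where
  "simple_roots e r k = (case k of 0 \<Rightarrow> r | Suc j \<Rightarrow> e (Suc j) - e j)"

lemma inner_tail_sum:
  fixes e :: "nat \<Rightarrow> 'a::real_inner"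
  assumes orth: "\<And>i j. i < N \<Longrightarrow> j < N \<Longrightarrow> e i \<bullet> e j = (if i = j then 1 else 0)"
    and "i < N"
  shows "e i \<bullet> (\<Sum>k\<in>{j..<N}. e k) = (if j \<le> i then 1 else 0)"
proof -
  have "e i \<bullet> (\<Sum>k\<in>{j..<N}. e k) = (\<Sum>k\<in>{j..<N}. if k = i then 1 else 0)"
    unfolding inner_sum_right using \<open>i < N\<close> by (intro sum.cong) (auto simp: orth)
  with \<open>i < N\<close> show ?thesis by simp
qed

lemma open_simplicial_cone_type_B:
  fixes e :: "nat \<Rightarrow> 'a::euclidean_space"
  assumes N: "N = DIM('a)"
    and orth: "\<And>i j. i < N \<Longrightarrow> j < N \<Longrightarrow> e i \<bullet> e j = (if i = j then 1 else 0)"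
  shows "open_simplicial_cone (open_polyhedral_cone (simple_roots e (e 0)) N)"
proof (rule open_simplicial_cone_biorthogonal[OF N])
  fix i j assume "i < N" "j < N"
  then show "simple_roots e (e 0) i \<bullet> (\<Sum>k\<in>{j..<N}. e k) = (if i = j then 1 else 0)"
    by (auto simp: simple_roots_def inner_diff_left inner_tail_sum[OF orth] split: nat.split)
qed

lemma open_simplicial_cone_type_D:
  fixes e :: "nat \<Rightarrow> 'a::euclidean_space"
  assumes N: "N = DIM('a)" and "2 \<le> N"
    and orth: "\<And>i j. i < N \<Longrightarrow> j < N \<Longrightarrow> e i \<bullet> e j = (if i = j then 1 else 0)"
  shows "open_simplicial_cone (open_polyhedral_cone (simple_roots e (e 0 + e 1)) N)"
proof (rule open_simplicial_cone_biorthogonal[OF N])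
  define T where "T j = (\<Sum>k\<in>{j..<N}. e k)" for j
  fix i j assume "i < N" "j < N"
  then show "simple_roots e (e 0 + e 1) i \<bullet>
      (case j of 0 \<Rightarrow> (1/2) *\<^sub>R T 0 | Suc 0 \<Rightarrow> (1/2) *\<^sub>R (T 1 - e 0) | _ \<Rightarrow> T j)
      = (if i = j then 1 else 0)"
    using \<open>2 \<le> N\<close>
    by (auto simp: simple_roots_def T_def inner_diff_left inner_add_left inner_diff_right
        inner_tail_sum[OF orth] orth split: nat.split)
qed

lemma abs_less_of_increasing_chain:
  fixes y :: "nat \<Rightarrow> real"
  assumes base: "\<bar>y 0\<bar> < y 1" and step: "\<And>j. Suc j < N \<Longrightarrow> y j < y (Suc j)"
    and "a < b" "b < N"
  shows "\<bar>y a\<bar> < \<bar>y b\<bar>"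
proof -
  have less: "y i < y j" if "i < j" "j < N" for i j
  proof (rule lift_Suc_mono_less_ivl[of "{k. Suc k < N}"])
    show "{i..<j} \<subseteq> {k. Suc k < N}"
      using that by auto
  qed (use step that in auto)
  have pos: "0 < y j" if "0 < j" "j < N" for j
    using base less[of 1 j] that by (cases "j = 1") auto
  show ?thesis
  proof (cases "a = 0")
    case True
    then show ?thesis
      using base less[of 1 b] pos[of b] \<open>a < b\<close> \<open>b < N\<close> by (cases "b = 1") auto
  next
    case False
    then show ?thesis
      using less[of a b] pos[of a] pos[of b] \<open>a < b\<close> \<open>b < N\<close> by auto
  qed
qed

lemma notin_Union_arrB_iff:
  "x \<notin> \<Union>arrB \<longleftrightarrow> x $ first_idx \<noteq> 0 \<and> (\<forall>i j. i \<noteq> j \<longrightarrow> \<bar>x $ i\<bar> \<noteq> \<bar>x $ j\<bar>)"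
proof -
  have "x \<in> \<Union>arrB \<longleftrightarrow> x $ first_idx = 0 \<or> (\<exists>i j. i < j \<and> \<bar>x $ i\<bar> = \<bar>x $ j\<bar>)"
    unfolding arrB_def abs_eq_iff by blast
  also have "\<dots> \<longleftrightarrow> x $ first_idx = 0 \<or> (\<exists>i j. i \<noteq> j \<and> \<bar>x $ i\<bar> = \<bar>x $ j\<bar>)"
    by (metis less_irrefl neq_iff)
  finally show ?thesis by blast
qed

lemma inj_sorted_enumeration:
  fixes f :: "'a::finite \<Rightarrow> 'b::linorder"
  assumes "inj f"
  obtains \<sigma> where "bij_betw \<sigma> {..<CARD('a)} UNIV"
    and "\<And>a b. a < b \<Longrightarrow> b < CARD('a) \<Longrightarrow> f (\<sigma> a) < f (\<sigma> b)"
proof -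
  obtain xs :: "'a list" where "set xs = UNIV" "distinct xs"
    using finite_distinct_list[of "UNIV :: 'a set"] by auto
  define ys where "ys = sort_key f xs"
  have ys: "set ys = UNIV" "distinct ys" "sorted (map f ys)"
    using \<open>set xs = UNIV\<close> \<open>distinct xs\<close> by (auto simp: ys_def)
  then have len: "length ys = CARD('a)"
    by (metis distinct_card)
  show ?thesis
  proof
    show "bij_betw ((!) ys) {..<CARD('a)} UNIV"
      by (intro bij_betw_nth) (use ys len in auto)
    fix a b assume "a < b" "b < CARD('a)"
    then have "f (ys ! a) \<le> f (ys ! b)" and "ys ! a \<noteq> ys ! b"
      using ys len by (auto simp: sorted_iff_nth_mono nth_eq_iff_index_eq)
    then show "f (ys ! a) < f (ys ! b)"
      using \<open>inj f\<close> by (metis inj_eq order_le_neq_trans)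
  qed
qed

locale abs_sorted_point =
  fixes p :: "real ^ 'n::{finite,wellorder}" and \<sigma> :: "nat \<Rightarrow> 'n"
  assumes enum: "bij_betw \<sigma> {..<CARD('n)} UNIV"
    and abs_sorted: "\<And>a b. a < b \<Longrightarrow> b < CARD('n) \<Longrightarrow> \<bar>p $ \<sigma> a\<bar> < \<bar>p $ \<sigma> b\<bar>"
    and first_nonzero: "p $ first_idx \<noteq> 0"
    and two_le_card: "2 \<le> CARD('n)"
begin

definition frame :: "nat \<Rightarrow> real ^ 'n::{finite,wellorder}" where
  "frame k = (if p $ \<sigma> k < 0 then -1 else 1) *\<^sub>R axis (\<sigma> k) 1"

definition first_root :: "real ^ 'n::{finite,wellorder}" where
  "first_root = (if \<sigma> 0 = first_idx then frame 0 else frame 0 + frame 1)"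

abbreviation chamber_cone :: "(real ^ 'n::{finite,wellorder}) set" where
  "chamber_cone \<equiv> open_polyhedral_cone (simple_roots frame first_root) CARD('n)"

lemma enum_index:
  obtains a where "a < CARD('n)" "\<sigma> a = i"
  using enum unfolding bij_betw_def by (metis UNIV_I imageE lessThan_iff)

lemma frame_orthonormal:
  "i < CARD('n) \<Longrightarrow> j < CARD('n) \<Longrightarrow> frame i \<bullet> frame j = (if i = j then 1 else 0)"
  using enum by (auto simp: frame_def inner_axis_axis bij_betw_def inj_on_eq_iff)

lemma abs_inner_frame: "\<bar>frame k \<bullet> x\<bar> = \<bar>x $ \<sigma> k\<bar>"
  by (simp add: frame_def inner_axis')

lemma inner_frame_point: "frame k \<bullet> p = \<bar>p $ \<sigma> k\<bar>"
  by (simp add: frame_def inner_axis')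

lemma abs_inner_frame_neq:
  assumes "x \<notin> \<Union>arrB" "i < CARD('n)" "j < CARD('n)" "i \<noteq> j"
  shows "\<bar>frame i \<bullet> x\<bar> \<noteq> \<bar>frame j \<bullet> x\<bar>"
proof -
  have "\<sigma> i \<noteq> \<sigma> j"
    using enum assms(2-4) by (auto simp: bij_betw_def inj_on_eq_iff)
  with assms(1) show ?thesis
    unfolding notin_Union_arrB_iff by (simp add: abs_inner_frame)
qed

lemma simple_roots_nonzero:
  assumes "x \<notin> \<Union>arrB" "k < CARD('n)"
  shows "simple_roots frame first_root k \<bullet> x \<noteq> 0"
proof (cases k)
  case 0
  have "frame 0 \<bullet> x + frame 1 \<bullet> x \<noteq> 0"
    using abs_inner_frame_neq[OF assms(1), of 0 1] two_le_card by auto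
  moreover have "x $ first_idx \<noteq> 0"
    using assms(1) unfolding notin_Union_arrB_iff by simp
  ultimately show ?thesis
    using 0 abs_inner_frame[of 0 x]
    by (auto simp: simple_roots_def first_root_def inner_add_left)
next
  case (Suc j)
  then show ?thesis
    using abs_inner_frame_neq[OF assms(1), of "Suc j" j] assms(2)
    by (auto simp: simple_roots_def inner_diff_left)
qed

lemma point_in_chamber_cone: "p \<in> chamber_cone"
  unfolding open_polyhedral_cone_def
proof (intro CollectI allI impI)
  fix k assume "k < CARD('n)"
  show "0 < simple_roots frame first_root k \<bullet> p"
  proof (cases k)
    case 0
    have "0 < \<bar>p $ \<sigma> 1\<bar>"
      using abs_sorted[of 0 1] two_le_card by simp
    then show ?thesis
      using 0 first_nonzero
      by (auto simp: simple_roots_def first_root_def inner_add_left inner_frame_point)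
  next
    case (Suc j)
    then show ?thesis
      using abs_sorted[of j k] \<open>k < CARD('n)\<close>
      by (simp add: simple_roots_def inner_diff_left inner_frame_point)
  qed
qed

lemma first_root_pos:
  assumes "x \<in> chamber_cone"
  shows "0 < first_root \<bullet> x"
proof -
  have "0 < simple_roots frame first_root 0 \<bullet> x"
    using assms two_le_card unfolding open_polyhedral_cone_def by auto
  then show ?thesis
    by (simp add: simple_roots_def)
qed

lemma chamber_cone_abs_less:
  assumes "x \<in> chamber_cone" "a < b" "b < CARD('n)"
  shows "\<bar>x $ \<sigma> a\<bar> < \<bar>x $ \<sigma> b\<bar>"
proof -
  define y where "y k = frame k \<bullet> x" for k
  have roots_pos: "0 < simple_roots frame first_root k \<bullet> x" if "k < CARD('n)" for k
    using assms(1) that by (simp add: open_polyhedral_cone_def)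
  have step: "y j < y (Suc j)" if "Suc j < CARD('n)" for j
    using roots_pos[OF that] by (simp add: y_def simple_roots_def inner_diff_left)
  have base: "\<bar>y 0\<bar> < y 1"
    using first_root_pos[OF assms(1)] step[of 0] two_le_card
    by (auto simp: y_def first_root_def inner_add_left split: if_splits)
  show ?thesis
    using abs_less_of_increasing_chain[of y, OF base step assms(2,3)]
    by (simp add: y_def abs_inner_frame)
qed

lemma chamber_cone_disjoint_arrB:
  assumes "x \<in> chamber_cone"
  shows "x \<notin> \<Union>arrB"
proof -
  have "\<bar>x $ i\<bar> \<noteq> \<bar>x $ j\<bar>" if "i \<noteq> j" for i j
  proof -
    obtain a b where ab: "a < CARD('n)" "b < CARD('n)" "\<sigma> a = i" "\<sigma> b = j"
      by (metis enum_index)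
    with that have "a < b \<or> b < a"
      by (metis linorder_neqE_nat)
    then show ?thesis
      using chamber_cone_abs_less[OF assms] ab by (metis less_irrefl)
  qed
  moreover have "x $ first_idx \<noteq> 0"
  proof -
    obtain a where a: "a < CARD('n)" "\<sigma> a = first_idx"
      by (rule enum_index)
    show ?thesis
    proof (cases "a = 0")
      case True
      then have "0 < frame 0 \<bullet> x"
        using first_root_pos[OF assms] a by (simp add: first_root_def)
      then show ?thesis
        using abs_inner_frame[of 0 x] True a by auto
    next
      case False
      then show ?thesis
        using chamber_cone_abs_less[OF assms, of 0 a] a by auto
    qed
  qed
  ultimately show ?thesis
    unfolding notin_Union_arrB_iff by blast
qed

lemma chamber_cone_simplicial: "open_simplicial_cone chamber_cone"
proof -
  have N: "CARD('n) = DIM(real ^ 'n::{finite,wellorder})"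
    by simp
  show ?thesis
  proof (cases "\<sigma> 0 = first_idx")
    case True
    then show ?thesis
      using open_simplicial_cone_type_B[OF N frame_orthonormal] by (simp add: first_root_def)
  next
    case False
    then show ?thesis
      using open_simplicial_cone_type_D[OF N two_le_card frame_orthonormal]
      by (simp add: first_root_def)
  qed
qed

end

theorem lemma3p1:
  fixes A :: "(real ^ ('n::{finite,wellorder})) set set"
  assumes "CARD('n) \<ge> 2"
    and "A = arrB"
  shows "simplicial_arrangement A"
  unfolding simplicial_arrangement_def chambers_def assms(2)
proof
  fix C :: "(real ^ 'n::{finite,wellorder}) set"
  assume C: "C \<in> components (UNIV - \<Union>arrB)"
  obtain p where "p \<in> C"
    using in_components_nonempty[OF C] by blast
  then have p: "p \<notin> \<Union>arrB"
    using in_components_subset[OF C] by blast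
  then have "inj (\<lambda>i. \<bar>p $ i\<bar>)"
    unfolding notin_Union_arrB_iff by (auto simp: inj_def)
  then obtain \<sigma> where "bij_betw \<sigma> {..<CARD('n)} UNIV"
    and "\<And>a b. a < b \<Longrightarrow> b < CARD('n) \<Longrightarrow> \<bar>p $ \<sigma> a\<bar> < \<bar>p $ \<sigma> b\<bar>"
    using inj_sorted_enumeration by blast
  then interpret abs_sorted_point p \<sigma>
    using p assms(1) unfolding notin_Union_arrB_iff by unfold_locales auto
  have "C = chamber_cone"
  proof (rule component_eq_open_polyhedral_cone[OF C \<open>p \<in> C\<close> _ point_in_chamber_cone])
    show "simple_roots frame first_root k \<bullet> x \<noteq> 0"
      if "x \<in> UNIV - \<Union>arrB" "k < CARD('n)" for x k
      using simple_roots_nonzero that by blast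
    show "chamber_cone \<subseteq> UNIV - \<Union>arrB"
      using chamber_cone_disjoint_arrB by blast
  qed
  with chamber_cone_simplicial show "open_simplicial_cone C"
    by simp
qed

end
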